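(* Let $G$ be a simple graph with $V(G)=V_1\cup V_2$, $V_1\cap V_2=\{v_0\}$, and $E(G)=E(G[V_1])\cup E(G[V_2])$. If $f_i\in\mathrm{SEDF}^0(G[V_i])$ for $i=1,2$, then the function $f=f_1*f_2:E(G)\to\{1,-1\}$, defined by $f(e)=f_i(e)$ for $e\in E(G[V_i])$, belongs to $\mathrm{SEDF}^0(G)$ and $f(G)=f_1(G[V_1])+f_2(G[V_2])$.
   Context: $G[S]$ denotes the subgraph induced by $S$. For a graph $H$ and $f:E(H)\to\{1,-1\}$, $f(H)=\sum_{e\in E(H)}f(e)$ and $f(v)=\sum_{e\in E_H(v)}f(e)$, where $E_H(v)$ is the set of edges of $H$ incident with $v$. $\mathrm{SEDF}^0(H)$ is the set of functions $f:E(H)\to\{1,-1\}$ such that (a) $f(v)\ge 0$ for all $v\in V(H)$, and (b) $f(u)+f(v)\ge 2$ for every edge $uv$ with $f(uv)=1$. *)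

theory Defs
  imports Main
begin

definition simple_graph :: "'a set \<Rightarrow> 'a set set \<Rightarrow> bool" where
  "simple_graph V E \<longleftrightarrow> finite V \<and>
     (\<forall>e\<in>E. \<exists>u v. u \<noteq> v \<and> u \<in> V \<and> v \<in> V \<and> e = {u, v})"

definition induced_edges :: "'a set set \<Rightarrow> 'a set \<Rightarrow> 'a set set" where
  "induced_edges E S = {e \<in> E. e \<subseteq> S}"

definition vweight :: "('a set \<Rightarrow> int) \<Rightarrow> 'a set set \<Rightarrow> 'a \<Rightarrow> int" where
  "vweight f E v = (\<Sum>e\<in>{e \<in> E. v \<in> e}. f e)"

definition gweight :: "('a set \<Rightarrow> int) \<Rightarrow> 'a set set \<Rightarrow> int" where
  "gweight f E = (\<Sum>e\<in>E. f e)"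

definition SEDF0 :: "'a set \<Rightarrow> 'a set set \<Rightarrow> ('a set \<Rightarrow> int) set" where
  "SEDF0 V E = {f. (\<forall>e\<in>E. f e = 1 \<or> f e = -1)
       \<and> (\<forall>v\<in>V. vweight f E v \<ge> 0)
       \<and> (\<forall>u v. {u, v} \<in> E \<and> f {u, v} = 1 \<longrightarrow> vweight f E u + vweight f E v \<ge> 2)}"

end

theory Submission
  imports Defs
begin

text \<open>Since V1 and V2 share only v0 and every edge has two distinct ends, no edge lies in
  both induced subgraphs. So E(G) is the disjoint union of the two edge sets, f(v) splits as
  f1(v) + f2(v) with both summands nonnegative (a vertex outside V_i has f_i(v) = 0), and
  both SEDF conditions, as well as the total weight, follow additively.\<close>

lemma simple_graph_finite_edges:
  assumes "simple_graph V E"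
  shows "finite E"
proof -
  have "E \<subseteq> Pow V"
  proof
    fix e assume "e \<in> E"
    then obtain u v where "u \<in> V" "v \<in> V" "e = {u, v}"
      using assms unfolding simple_graph_def by meson
    then show "e \<in> Pow V" by simp
  qed
  moreover have "finite V"
    using assms unfolding simple_graph_def by blast
  ultimately show ?thesis
    by (meson finite_Pow_iff finite_subset)
qed

lemma induced_edges_disjoint:
  assumes "simple_graph V E" and "V1 \<inter> V2 \<subseteq> {v0}"
  shows "induced_edges E V1 \<inter> induced_edges E V2 = {}"
proof (rule ccontr)
  assume "induced_edges E V1 \<inter> induced_edges E V2 \<noteq> {}"
  then obtain e where "e \<in> E" and "e \<subseteq> V1 \<inter> V2"
    unfolding induced_edges_def by blast
  moreover obtain u v where "u \<noteq> v" and "e = {u, v}"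
    using assms(1) \<open>e \<in> E\<close> unfolding simple_graph_def by blast
  ultimately show False
    using assms(2) by blast
qed

lemma vweight_cong:
  "(\<And>e. e \<in> E \<Longrightarrow> f e = g e) \<Longrightarrow> vweight f E v = vweight g E v"
  unfolding vweight_def by (rule sum.cong) auto

lemma gweight_cong:
  "(\<And>e. e \<in> E \<Longrightarrow> f e = g e) \<Longrightarrow> gweight f E = gweight g E"
  unfolding gweight_def by (rule sum.cong) auto

lemma vweight_Un_disjoint:
  assumes "finite E1" "finite E2" "E1 \<inter> E2 = {}"
  shows "vweight f (E1 \<union> E2) v = vweight f E1 v + vweight f E2 v"
proof -
  have "{e \<in> E1 \<union> E2. v \<in> e} = {e \<in> E1. v \<in> e} \<union> {e \<in> E2. v \<in> e}"
    by auto
  then show ?thesis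
    unfolding vweight_def using assms by (simp add: sum.union_disjoint disjoint_iff)
qed

lemma gweight_Un_disjoint:
  "finite E1 \<Longrightarrow> finite E2 \<Longrightarrow> E1 \<inter> E2 = {} \<Longrightarrow>
    gweight f (E1 \<union> E2) = gweight f E1 + gweight f E2"
  unfolding gweight_def by (rule sum.union_disjoint)

lemma vweight_eq_0_outside:
  assumes "\<And>e. e \<in> E \<Longrightarrow> e \<subseteq> V" and "v \<notin> V"
  shows "vweight f E v = 0"
proof -
  have "{e \<in> E. v \<in> e} = {}"
    using assms by blast
  then show ?thesis
    unfolding vweight_def by (metis sum.empty)
qed

lemma SEDF0_vweight_nonneg:
  assumes "f \<in> SEDF0 V E" and "\<And>e. e \<in> E \<Longrightarrow> e \<subseteq> V"
  shows "vweight f E v \<ge> 0"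
  using assms vweight_eq_0_outside[OF assms(2)] unfolding SEDF0_def
  by (cases "v \<in> V") auto

lemma SEDF0_edge_disjoint_union:
  assumes f1: "f1 \<in> SEDF0 V1 E1" and f2: "f2 \<in> SEDF0 V2 E2"
    and sub1: "\<And>e. e \<in> E1 \<Longrightarrow> e \<subseteq> V1" and sub2: "\<And>e. e \<in> E2 \<Longrightarrow> e \<subseteq> V2"
    and fin: "finite E1" "finite E2" and disj: "E1 \<inter> E2 = {}"
  shows "(\<lambda>e. if e \<in> E1 then f1 e else f2 e) \<in> SEDF0 (V1 \<union> V2) (E1 \<union> E2)"
proof -
  define g where "g = (\<lambda>e. if e \<in> E1 then f1 e else f2 e)"
  have vweight_g: "vweight g (E1 \<union> E2) v = vweight f1 E1 v + vweight f2 E2 v" for v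
  proof -
    have "vweight g E1 v = vweight f1 E1 v"
      unfolding g_def by (rule vweight_cong) simp
    moreover have "vweight g E2 v = vweight f2 E2 v"
      unfolding g_def using disj by (intro vweight_cong) auto
    ultimately show ?thesis
      using vweight_Un_disjoint[OF fin disj] by simp
  qed
  note nonneg1 = SEDF0_vweight_nonneg[OF f1 sub1]
    and nonneg2 = SEDF0_vweight_nonneg[OF f2 sub2]
  have "g \<in> SEDF0 (V1 \<union> V2) (E1 \<union> E2)"
    unfolding SEDF0_def
  proof (intro CollectI conjI ballI allI impI)
    fix e assume "e \<in> E1 \<union> E2"
    moreover have "\<forall>e\<in>E1. f1 e = 1 \<or> f1 e = -1" "\<forall>e\<in>E2. f2 e = 1 \<or> f2 e = -1"
      using f1 f2 unfolding SEDF0_def by simp_all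
    ultimately show "g e = 1 \<or> g e = -1"
      unfolding g_def by auto
  next
    fix v
    show "vweight g (E1 \<union> E2) v \<ge> 0"
      using vweight_g nonneg1 nonneg2 by simp
  next
    fix u v assume uv: "{u, v} \<in> E1 \<union> E2 \<and> g {u, v} = 1"
    show "vweight g (E1 \<union> E2) u + vweight g (E1 \<union> E2) v \<ge> 2"
    proof (cases "{u, v} \<in> E1")
      case True
      with uv have "f1 {u, v} = 1"
        unfolding g_def by simp
      with f1 True have "vweight f1 E1 u + vweight f1 E1 v \<ge> 2"
        unfolding SEDF0_def by blast
      then show ?thesis
        using vweight_g nonneg2[of u] nonneg2[of v] by simp
    next
      case False
      with uv have "{u, v} \<in> E2" "f2 {u, v} = 1"
        unfolding g_def by auto
      with f2 have "vweight f2 E2 u + vweight f2 E2 v \<ge> 2"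
        unfolding SEDF0_def by blast
      then show ?thesis
        using vweight_g nonneg1[of u] nonneg1[of v] by simp
    qed
  qed
  then show ?thesis
    unfolding g_def .
qed

theorem lemma2p2:
  fixes V V1 V2 :: "'a set" and E :: "'a set set" and v0 :: 'a
    and f1 f2 :: "'a set \<Rightarrow> int"
  assumes "simple_graph V E"
    and "V = V1 \<union> V2"
    and "V1 \<inter> V2 = {v0}"
    and "E = induced_edges E V1 \<union> induced_edges E V2"
    and "f1 \<in> SEDF0 V1 (induced_edges E V1)"
    and "f2 \<in> SEDF0 V2 (induced_edges E V2)"
  shows "(\<lambda>e. if e \<in> induced_edges E V1 then f1 e else f2 e) \<in> SEDF0 V E
    \<and> gweight (\<lambda>e. if e \<in> induced_edges E V1 then f1 e else f2 e) E
        = gweight f1 (induced_edges E V1) + gweight f2 (induced_edges E V2)"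
proof -
  let ?E1 = "induced_edges E V1" and ?E2 = "induced_edges E V2"
  let ?f = "\<lambda>e. if e \<in> ?E1 then f1 e else f2 e"
  have disj: "?E1 \<inter> ?E2 = {}"
    using induced_edges_disjoint[OF assms(1)] assms(3) by simp
  have fin: "finite ?E1" "finite ?E2"
    using simple_graph_finite_edges[OF assms(1)] by (simp_all add: induced_edges_def)
  have "?f \<in> SEDF0 (V1 \<union> V2) (?E1 \<union> ?E2)"
    by (rule SEDF0_edge_disjoint_union[OF assms(5,6) _ _ fin disj])
      (simp_all add: induced_edges_def)
  \<comment> \<open>assms(4) has E on both sides, so rewriting with it by simp would not terminate\<close>
  then have "?f \<in> SEDF0 V E"
    using assms(2,4) by argo
  moreover have "gweight ?f E = gweight f1 ?E1 + gweight f2 ?E2"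
  proof -
    have "gweight ?f E = gweight ?f ?E1 + gweight ?f ?E2"
      using gweight_Un_disjoint[OF fin disj, of ?f] assms(4) by argo
    also have "\<dots> = gweight f1 ?E1 + gweight f2 ?E2"
      using disj by (intro arg_cong2[where f = "(+)"] gweight_cong) auto
    finally show ?thesis .
  qed
  ultimately show ?thesis ..
qed

end
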